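(* If $H$ is a finite simple connected graph of order at least $3$, then the Cartesian product $K_2 \,\square\, H$ is not well-dominated.
   Context: A graph is well-dominated if every minimal (with respect to inclusion) dominating set is a minimum dominating set. The Cartesian product $G\,\square\, H$ has vertex set $V(G)\times V(H)$, with $(g_1,h_1)$ adjacent to $(g_2,h_2)$ iff either ($g_1=g_2$ and $h_1h_2\in E(H)$) or ($h_1=h_2$ and $g_1g_2\in E(G)$). *)

theory Defs
  imports Main
begin

definition simple_graph :: "'a set \<Rightarrow> ('a \<Rightarrow> 'a \<Rightarrow> bool) \<Rightarrow> bool" where
  "simple_graph V E \<longleftrightarrow>
     (\<forall>u v. E u v \<longrightarrow> u \<in> V \<and> v \<in> V) \<and>
     (\<forall>u v. E u v \<longrightarrow> E v u) \<and>
     (\<forall>v. \<not> E v v)"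

definition connected_graph :: "'a set \<Rightarrow> ('a \<Rightarrow> 'a \<Rightarrow> bool) \<Rightarrow> bool" where
  "connected_graph V E \<longleftrightarrow> V \<noteq> {} \<and>
     (\<forall>u\<in>V. \<forall>v\<in>V. (u, v) \<in> {(x, y). E x y}\<^sup>*)"

definition dominating_set :: "'a set \<Rightarrow> ('a \<Rightarrow> 'a \<Rightarrow> bool) \<Rightarrow> 'a set \<Rightarrow> bool" where
  "dominating_set V E D \<longleftrightarrow> D \<subseteq> V \<and> (\<forall>v\<in>V. v \<in> D \<or> (\<exists>u\<in>D. E u v))"

definition minimal_dominating_set :: "'a set \<Rightarrow> ('a \<Rightarrow> 'a \<Rightarrow> bool) \<Rightarrow> 'a set \<Rightarrow> bool" where
  "minimal_dominating_set V E D \<longleftrightarrow> dominating_set V E D \<and>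
     (\<forall>D'. D' \<subset> D \<longrightarrow> \<not> dominating_set V E D')"

definition minimum_dominating_set :: "'a set \<Rightarrow> ('a \<Rightarrow> 'a \<Rightarrow> bool) \<Rightarrow> 'a set \<Rightarrow> bool" where
  "minimum_dominating_set V E D \<longleftrightarrow> dominating_set V E D \<and>
     (\<forall>D'. dominating_set V E D' \<longrightarrow> card D \<le> card D')"

definition well_dominated :: "'a set \<Rightarrow> ('a \<Rightarrow> 'a \<Rightarrow> bool) \<Rightarrow> bool" where
  "well_dominated V E \<longleftrightarrow>
     (\<forall>D. minimal_dominating_set V E D \<longrightarrow> minimum_dominating_set V E D)"

definition cart_vertices :: "'a set \<Rightarrow> 'b set \<Rightarrow> ('a \<times> 'b) set" where
  "cart_vertices VG VH = VG \<times> VH"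

definition cart_edges ::
  "('a \<Rightarrow> 'a \<Rightarrow> bool) \<Rightarrow> ('b \<Rightarrow> 'b \<Rightarrow> bool) \<Rightarrow> ('a \<times> 'b) \<Rightarrow> ('a \<times> 'b) \<Rightarrow> bool" where
  "cart_edges EG EH = (\<lambda>(g1, h1) (g2, h2).
      (g1 = g2 \<and> EH h1 h2) \<or> (h1 = h2 \<and> EG g1 g2))"

definition K2_vertices :: "bool set" where
  "K2_vertices = UNIV"

definition K2_edges :: "bool \<Rightarrow> bool \<Rightarrow> bool" where
  "K2_edges a b \<longleftrightarrow> a \<noteq> b"

end

theory Submission
  imports Defs
begin

text \<open>Some vertex v of H has two distinct neighbours u and w. In \<open>K\<^sub>2 \<box> H\<close> the layer
  \<open>{False} \<times> V\<close> is a minimal dominating set of size |V|, since each \<open>(True, x)\<close> has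
  \<open>(False, x)\<close> as its only neighbour in that layer. Replacing \<open>(False, u)\<close> and
  \<open>(False, w)\<close> by the single vertex \<open>(True, v)\<close> still dominates, and has size |V| - 1.\<close>

lemma connected_graph_obtains_two_neighbours:
  assumes sym: "\<And>x y. E x y \<Longrightarrow> E y x"
    and conn: "connected_graph V E"
    and card_V: "card V \<ge> 3"
  obtains v u w where "E v u" and "E v w" and "u \<noteq> w"
proof (rule ccontr)
  assume "\<not> thesis"
  with that have unique_nbr: "\<And>v u w. E v u \<Longrightarrow> E v w \<Longrightarrow> u = w" by blast
  from conn obtain a where a: "a \<in> V" unfolding connected_graph_def by blast
  define S where "S = insert a {y. E a y}"
  have reach_S: "y \<in> S" if "(a, y) \<in> {(x, y). E x y}\<^sup>*" for y
    using that
  proof (induction rule: rtrancl_induct)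
    case base
    then show ?case by (simp add: S_def)
  next
    case (step y z)
    then have "E y z" by simp
    show ?case
    proof (cases "y = a")
      case True
      with \<open>E y z\<close> show ?thesis by (simp add: S_def)
    next
      case False
      with step.IH have "E y a" by (simp add: S_def sym)
      with \<open>E y z\<close> have "z = a" by (rule unique_nbr)
      then show ?thesis by (simp add: S_def)
    qed
  qed
  have "V \<subseteq> S"
    using conn a reach_S unfolding connected_graph_def by blast
  moreover have "S \<subseteq> {a, SOME b. E a b}"
    using unique_nbr by (auto simp: S_def intro: someI)
  ultimately have "card V \<le> card {a, SOME b. E a b}"
    by (meson card_mono finite.emptyI finite.insertI subset_trans)
  also have "\<dots> \<le> 2"
    by (simp add: card_insert_if)
  finally show False
    using card_V by simp
qed

lemma cart_edges_K2:
  "cart_edges K2_edges E (a, x) (b, y) \<longleftrightarrow> (a = b \<and> E x y) \<or> (x = y \<and> a \<noteq> b)"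
  by (auto simp: cart_edges_def K2_edges_def)

lemma minimal_dominating_set_K2_layer:
  "minimal_dominating_set (cart_vertices K2_vertices V) (cart_edges K2_edges E) ({b} \<times> V)"
  unfolding minimal_dominating_set_def
proof (intro conjI allI impI)
  show "dominating_set (cart_vertices K2_vertices V) (cart_edges K2_edges E) ({b} \<times> V)"
    by (auto simp: dominating_set_def cart_vertices_def K2_vertices_def cart_edges_K2)
next
  fix D' assume D': "D' \<subset> {b} \<times> V"
  then obtain x where x: "x \<in> V" and "(b, x) \<notin> D'" by blast
  with D' have "(\<not> b, x) \<notin> D' \<and> \<not> (\<exists>q\<in>D'. cart_edges K2_edges E q (\<not> b, x))"
    by (auto simp: cart_edges_K2)
  with x show "\<not> dominating_set (cart_vertices K2_vertices V) (cart_edges K2_edges E) D'"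
    by (auto simp: dominating_set_def cart_vertices_def K2_vertices_def)
qed

lemma dominating_set_K2_swap_neighbours:
  assumes "v \<in> V" and "E v u" and "E v w" and "v \<noteq> u" and "v \<noteq> w"
  shows "dominating_set (cart_vertices K2_vertices V) (cart_edges K2_edges E)
           (insert (True, v) ({False} \<times> (V - {u, w})))"
  unfolding dominating_set_def cart_vertices_def K2_vertices_def
proof (intro conjI ballI)
  fix p assume "p \<in> (UNIV :: bool set) \<times> V"
  then obtain b x where p: "p = (b, x)" and "x \<in> V" by blast
  then show "p \<in> insert (True, v) ({False} \<times> (V - {u, w})) \<or>
    (\<exists>q\<in>insert (True, v) ({False} \<times> (V - {u, w})). cart_edges K2_edges E q p)"
    using assms by (cases b; cases "x = u \<or> x = w") (force simp: cart_edges_K2)+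
qed (use assms in auto)

lemma card_K2_swap_neighbours:
  assumes "finite V" and "u \<in> V" and "w \<in> V" and "u \<noteq> w"
  shows "card (insert (True, v) ({False} \<times> (V - {u, w}))) < card V"
proof -
  have "card (insert (True, v) ({False} \<times> (V - {u, w}))) \<le> Suc (card (V - {u, w}))"
    using assms(1) by (simp add: card_insert_if card_cartesian_product)
  also have "card (V - {u, w}) = card V - 2"
    using assms by (simp add: card_Diff_subset)
  finally show ?thesis
    using assms card_mono[of V "{u, w}"] by simp
qed

lemma not_well_dominated_if_smaller_dominating_set:
  assumes "minimal_dominating_set V E D" and "dominating_set V E D'" and "card D' < card D"
  shows "\<not> well_dominated V E"
  using assms unfolding well_dominated_def minimum_dominating_set_def by fastforce

theorem proposition22:
  fixes V :: "'a set" and E :: "'a \<Rightarrow> 'a \<Rightarrow> bool"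
  assumes "finite V"
    and "simple_graph V E"
    and "connected_graph V E"
    and "card V \<ge> 3"
  shows "\<not> well_dominated (cart_vertices K2_vertices V) (cart_edges K2_edges E)"
proof -
  have sym: "\<And>x y. E x y \<Longrightarrow> E y x"
    using assms(2) unfolding simple_graph_def by blast
  obtain v u w where vu: "E v u" and vw: "E v w" and "u \<noteq> w"
    using connected_graph_obtains_two_neighbours[OF sym assms(3,4)] .
  moreover have "v \<in> V" "u \<in> V" "w \<in> V" "v \<noteq> u" "v \<noteq> w"
    using vu vw assms(2) unfolding simple_graph_def by blast+
  ultimately have "dominating_set (cart_vertices K2_vertices V) (cart_edges K2_edges E)
      (insert (True, v) ({False} \<times> (V - {u, w})))"
    and "card (insert (True, v) ({False} \<times> (V - {u, w}))) < card ({False} \<times> V)"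
    using dominating_set_K2_swap_neighbours card_K2_swap_neighbours[OF assms(1)]
    by (simp_all add: card_cartesian_product)
  then show ?thesis
    by (rule not_well_dominated_if_smaller_dominating_set[OF minimal_dominating_set_K2_layer])
qed

end
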